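(* Let $T$ be a locally finite tree, $G\leq\mathrm{Aut}(T)$ a closed subgroup, $g\in G$ hyperbolic and $x\in\partial T$ the attracting fixed point of $g$. The following are equivalent: (i) $G_x$ is open in $G$; (ii) there is a compact open subgroup $K\leq G$ with $g^nKg^{-n}\supseteq K$ for all $n\in\mathbb{N}$; (iii) there is a compact open subgroup $K\leq G$ such that $[K:K\cap g^nKg^{-n}]$, $n\in\mathbb{N}$, is bounded; (iv) for all compact open subgroups $K\leq G$ the sequence $[K:K\cap g^nKg^{-n}]$, $n\in\mathbb{N}$, is bounded.
   Context: $\mathrm{Aut}(T)$ has the topology of pointwise convergence. A hyperbolic automorphism fixes no vertex or edge; it fixes exactly two boundary points and translates along the geodesic axis between them; the attracting fixed point is the one toward which it translates. *)

theory Defs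
  imports "HOL-Analysis.Analysis" "HOL-Algebra.Coset"
begin

definition is_walk :: "('v \<Rightarrow> 'v \<Rightarrow> bool) \<Rightarrow> 'v list \<Rightarrow> bool" where
  "is_walk E xs \<longleftrightarrow> (\<forall>i. Suc i < length xs \<longrightarrow> E (xs ! i) (xs ! Suc i))"

definition non_backtracking :: "'v list \<Rightarrow> bool" where
  "non_backtracking xs \<longleftrightarrow> (\<forall>i. Suc (Suc i) < length xs \<longrightarrow> xs ! i \<noteq> xs ! Suc (Suc i))"

definition is_tree :: "('v \<Rightarrow> 'v \<Rightarrow> bool) \<Rightarrow> bool" where
  "is_tree E \<longleftrightarrow>
     (\<forall>u v. E u v \<longrightarrow> E v u) \<and> (\<forall>v. \<not> E v v) \<and>
     (\<forall>u v. (u, v) \<in> {(a, b). E a b}\<^sup>*) \<and>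
     (\<forall>xs. length xs \<ge> 2 \<and> is_walk E xs \<and> non_backtracking xs \<longrightarrow> hd xs \<noteq> last xs)"

definition locally_finite :: "('v \<Rightarrow> 'v \<Rightarrow> bool) \<Rightarrow> bool" where
  "locally_finite E \<longleftrightarrow> (\<forall>v. finite {u. E v u})"

definition tree_aut :: "('v \<Rightarrow> 'v \<Rightarrow> bool) \<Rightarrow> ('v \<Rightarrow> 'v) \<Rightarrow> bool" where
  "tree_aut E f \<longleftrightarrow> bij f \<and> (\<forall>u v. E (f u) (f v) \<longleftrightarrow> E u v)"

definition aut_group :: "('v \<Rightarrow> 'v \<Rightarrow> bool) \<Rightarrow> ('v \<Rightarrow> 'v) monoid" where
  "aut_group E = \<lparr>carrier = {f. tree_aut E f}, mult = (\<circ>), one = id\<rparr>"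

definition pw_top :: "('v \<Rightarrow> 'v) topology" where
  "pw_top = product_topology (\<lambda>_. discrete_topology UNIV) UNIV"

definition aut_top :: "('v \<Rightarrow> 'v \<Rightarrow> bool) \<Rightarrow> ('v \<Rightarrow> 'v) topology" where
  "aut_top E = subtopology pw_top (carrier (aut_group E))"

definition closed_subgroup :: "('v \<Rightarrow> 'v \<Rightarrow> bool) \<Rightarrow> ('v \<Rightarrow> 'v) set \<Rightarrow> bool" where
  "closed_subgroup E G \<longleftrightarrow> subgroup G (aut_group E) \<and> closedin (aut_top E) G"

definition compact_open_subgroup ::
  "('v \<Rightarrow> 'v \<Rightarrow> bool) \<Rightarrow> ('v \<Rightarrow> 'v) set \<Rightarrow> ('v \<Rightarrow> 'v) set \<Rightarrow> bool" where
  "compact_open_subgroup E G K \<longleftrightarrow>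
     subgroup K (aut_group E) \<and> K \<subseteq> G \<and> compactin (aut_top E) K \<and>
     openin (subtopology (aut_top E) G) K"

definition hyperbolic :: "('v \<Rightarrow> 'v \<Rightarrow> bool) \<Rightarrow> ('v \<Rightarrow> 'v) \<Rightarrow> bool" where
  "hyperbolic E g \<longleftrightarrow> tree_aut E g \<and> (\<forall>v. g v \<noteq> v) \<and>
     \<not> (\<exists>u v. E u v \<and> g u = v \<and> g v = u)"

definition is_ray :: "('v \<Rightarrow> 'v \<Rightarrow> bool) \<Rightarrow> (nat \<Rightarrow> 'v) \<Rightarrow> bool" where
  "is_ray E r \<longleftrightarrow> (\<forall>n. E (r n) (r (Suc n))) \<and> (\<forall>n. r n \<noteq> r (Suc (Suc n)))"

definition ray_class :: "('v \<Rightarrow> 'v \<Rightarrow> bool) \<Rightarrow> (nat \<Rightarrow> 'v) \<Rightarrow> (nat \<Rightarrow> 'v) set" where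
  "ray_class E r = {s. is_ray E s \<and> (\<exists>k m. \<forall>n. s (n + k) = r (n + m))}"

definition tree_ends :: "('v \<Rightarrow> 'v \<Rightarrow> bool) \<Rightarrow> (nat \<Rightarrow> 'v) set set" where
  "tree_ends E = {ray_class E r | r. is_ray E r}"

definition end_action :: "('v \<Rightarrow> 'v) \<Rightarrow> (nat \<Rightarrow> 'v) set \<Rightarrow> (nat \<Rightarrow> 'v) set" where
  "end_action h \<xi> = (\<lambda>r. h \<circ> r) ` \<xi>"

definition end_stabilizer ::
  "('v \<Rightarrow> 'v) set \<Rightarrow> (nat \<Rightarrow> 'v) set \<Rightarrow> ('v \<Rightarrow> 'v) set" where
  "end_stabilizer G \<xi> = {h \<in> G. end_action h \<xi> = \<xi>}"

definition attracting_end ::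
  "('v \<Rightarrow> 'v \<Rightarrow> bool) \<Rightarrow> ('v \<Rightarrow> 'v) \<Rightarrow> (nat \<Rightarrow> 'v) set \<Rightarrow> bool" where
  "attracting_end E g \<xi> \<longleftrightarrow>
     (\<exists>r k. is_ray E r \<and> \<xi> = ray_class E r \<and> k > 0 \<and> (\<forall>n. g (r n) = r (n + k)))"

definition conj_pow ::
  "('v \<Rightarrow> 'v \<Rightarrow> bool) \<Rightarrow> ('v \<Rightarrow> 'v) \<Rightarrow> nat \<Rightarrow> ('v \<Rightarrow> 'v) set \<Rightarrow> ('v \<Rightarrow> 'v) set" where
  "conj_pow E g n K =
     (\<lambda>k. (g [^]\<^bsub>aut_group E\<^esub> n) \<otimes>\<^bsub>aut_group E\<^esub> k \<otimes>\<^bsub>aut_group E\<^esub>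
          inv\<^bsub>aut_group E\<^esub> (g [^]\<^bsub>aut_group E\<^esub> n)) ` K"

definition sg_index ::
  "('v \<Rightarrow> 'v \<Rightarrow> bool) \<Rightarrow> ('v \<Rightarrow> 'v) set \<Rightarrow> ('v \<Rightarrow> 'v) set \<Rightarrow> nat" where
  "sg_index E K H = card (rcosets\<^bsub>(aut_group E)\<lparr>carrier := K\<rparr>\<^esub> H)"

end

theory Submission
  imports Defs
begin

text \<open>Write the attracting end as the class of a ray r with g (r n) = r (n + k), k > 0.
  In a tree an automorphism fixing r 0 and r m fixes the geodesic between them, and one fixing
  r 0 and the end fixes all of r.

  (i) \<Rightarrow> (ii): if G_x is open, so is the pointwise fixator of r in G; it is compact, and
  g^{-n} (-) g^n maps it into itself because g^n maps r into itself. (ii) \<Rightarrow> (iii) holds with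
  index 1, and (iv) \<Rightarrow> (iii) because vertex stabilisers are compact open.

  (iii) \<Rightarrow> (i): counting cosets, [K : K \<inter> g^n K g^{-n}] \<le> B bounds the K-orbit of r (n k)
  by B |K r 0|. For the stabiliser K' of r 0 in K the orbit sizes |K' r m| are nondecreasing
  in m and bounded, hence attain their maximum at some M; beyond M the orbit maps are
  bijective, so an element of K' fixing r M fixes the whole ray. This open subgroup lies in G_x.

  (i) \<Rightarrow> (iv): [L : L \<inter> g^n L g^{-n}] is at most a product of orbit sizes |L g^n u| over a
  finite set of u, and |L g^n u| \<le> [L : H] |H g^n u| \<le> [L : H] |R u|, where H is an open
  subgroup of L contained in the compact fixator R of r.\<close>

section \<open>The automorphism group of a tree\<close>

text \<open>Plain inv is taken by the group syntax of HOL-Algebra.\<close>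
abbreviation fun_inv :: "('a \<Rightarrow> 'b) \<Rightarrow> 'b \<Rightarrow> 'a" where
  "fun_inv f \<equiv> inv_into UNIV f"

lemma tree_aut_inv: "tree_aut E f \<Longrightarrow> tree_aut E (fun_inv f)"
  unfolding tree_aut_def by (metis bij_betw_inv_into bij_inv_eq_iff)

lemma tree_aut_comp: "tree_aut E f \<Longrightarrow> tree_aut E h \<Longrightarrow> tree_aut E (f \<circ> h)"
  unfolding tree_aut_def by (auto simp: bij_comp)

lemma tree_aut_id: "tree_aut E id"
  unfolding tree_aut_def by auto

lemma tree_aut_funpow: "tree_aut E g \<Longrightarrow> tree_aut E (g ^^ n)"
  by (induction n) (auto simp: tree_aut_id tree_aut_comp)

lemma tree_aut_adj: "tree_aut E f \<Longrightarrow> E (f u) (f v) = E u v"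
  by (simp add: tree_aut_def)

lemma tree_aut_eq_iff: "tree_aut E f \<Longrightarrow> f a = f b \<longleftrightarrow> a = b"
  by (meson bij_def injD tree_aut_def)

lemma tree_aut_inv_f [simp]: "tree_aut E f \<Longrightarrow> fun_inv f (f u) = u"
  by (meson bij_def inv_f_f tree_aut_def)

lemma tree_aut_f_inv [simp]: "tree_aut E f \<Longrightarrow> f (fun_inv f u) = u"
  by (meson bij_inv_eq_iff tree_aut_def)

lemma aut_group_simps [simp]:
  "carrier (aut_group E) = {f. tree_aut E f}"
  "mult (aut_group E) = (\<circ>)"
  "one (aut_group E) = id"
  by (simp_all add: aut_group_def)

lemma group_aut_group: "group (aut_group E)"
proof (rule groupI)
  fix f assume "f \<in> carrier (aut_group E)"
  then have "tree_aut E f" by simp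
  then have "fun_inv f \<in> carrier (aut_group E)" "fun_inv f \<otimes>\<^bsub>aut_group E\<^esub> f = \<one>\<^bsub>aut_group E\<^esub>"
    by (auto simp: tree_aut_inv fun_eq_iff)
  then show "\<exists>h\<in>carrier (aut_group E). h \<otimes>\<^bsub>aut_group E\<^esub> f = \<one>\<^bsub>aut_group E\<^esub>" by blast
qed (auto simp: tree_aut_comp tree_aut_id comp_assoc)

lemma aut_group_inv [simp]: "tree_aut E f \<Longrightarrow> inv\<^bsub>aut_group E\<^esub> f = fun_inv f"
  by (rule group.inv_equality[OF group_aut_group]) (auto simp: tree_aut_inv fun_eq_iff)

lemma aut_group_pow [simp]: "g [^]\<^bsub>aut_group E\<^esub> (n::nat) = g ^^ n"
  by (induction n) (simp_all del: funpow.simps add: funpow_Suc_right)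

lemma conj_pow_eq:
  "tree_aut E g \<Longrightarrow> conj_pow E g n K = (\<lambda>k. (g ^^ n) \<circ> k \<circ> fun_inv (g ^^ n)) ` K"
  by (simp add: conj_pow_def tree_aut_funpow)

lemma subgroup_aut_group_iff:
  "subgroup H (aut_group E) \<longleftrightarrow>
     (\<forall>a\<in>H. tree_aut E a) \<and> id \<in> H \<and> (\<forall>a\<in>H. \<forall>b\<in>H. a \<circ> b \<in> H) \<and> (\<forall>a\<in>H. fun_inv a \<in> H)"
proof
  assume H: "subgroup H (aut_group E)"
  have "\<forall>a\<in>H. tree_aut E a" using subgroup.subset[OF H] by auto
  with subgroup.m_inv_closed[OF H] subgroup.one_closed[OF H] subgroup.m_closed[OF H]
  show "(\<forall>a\<in>H. tree_aut E a) \<and> id \<in> H \<and> (\<forall>a\<in>H. \<forall>b\<in>H. a \<circ> b \<in> H) \<and> (\<forall>a\<in>H. fun_inv a \<in> H)"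
    by auto
qed (auto intro!: subgroup.intro)

lemma subgroup_aut_groupD:
  assumes "subgroup H (aut_group E)"
  shows "a \<in> H \<Longrightarrow> tree_aut E a" "id \<in> H" "a \<in> H \<Longrightarrow> b \<in> H \<Longrightarrow> a \<circ> b \<in> H"
    "a \<in> H \<Longrightarrow> fun_inv a \<in> H"
  using assms unfolding subgroup_aut_group_iff by blast+

lemma subgroup_aut_group_conj:
  assumes K: "subgroup K (aut_group E)" and c: "tree_aut E c"
  shows "subgroup ((\<lambda>k. c \<circ> k \<circ> fun_inv c) ` K) (aut_group E)"
proof -
  note KD = subgroup_aut_groupD[OF K]
  have "fun_inv (c \<circ> k \<circ> fun_inv c) = c \<circ> fun_inv k \<circ> fun_inv c" if "k \<in> K" for k
    using KD(1)[OF that] c by (intro inv_unique_comp) (auto simp: fun_eq_iff)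
  moreover have "c \<circ> id \<circ> fun_inv c = id" using c by (auto simp: fun_eq_iff)
  moreover have "(c \<circ> a \<circ> fun_inv c) \<circ> (c \<circ> b \<circ> fun_inv c) = c \<circ> (a \<circ> b) \<circ> fun_inv c" for a b
    using c by (auto simp: fun_eq_iff)
  ultimately show ?thesis
    unfolding subgroup_aut_group_iff using KD c
    by (auto intro!: tree_aut_comp tree_aut_inv image_eqI)
qed

definition fixator :: "'v set \<Rightarrow> ('v \<Rightarrow> 'v) set" where
  "fixator F = {h. \<forall>v\<in>F. h v = v}"

lemma fixator_iff [simp]: "h \<in> fixator F \<longleftrightarrow> (\<forall>v\<in>F. h v = v)"
  by (simp add: fixator_def)

lemma subgroup_aut_group_Int_fixator:
  assumes H: "subgroup H (aut_group E)"
  shows "subgroup (H \<inter> fixator F) (aut_group E)"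
proof -
  have "fun_inv a v = v" if "a \<in> H" "a v = v" for a v
    using tree_aut_inv_f[OF subgroup_aut_groupD(1)[OF H that(1)], of v] that(2) by simp
  then show ?thesis using H unfolding subgroup_aut_group_iff by auto
qed

section \<open>Counting cosets and orbits\<close>

lemma image_eq_image_via_factor:
  assumes "\<And>a b. a \<in> A \<Longrightarrow> b \<in> A \<Longrightarrow> g a = g b \<Longrightarrow> f a = f b"
  shows "f ` A = (f \<circ> inv_into A g) ` (g ` A)"
proof -
  have "f (inv_into A g (g a)) = f a" if "a \<in> A" for a
    using assms inv_into_into f_inv_into_f that by (metis image_eqI)
  then show ?thesis by (force simp: image_comp)
qed

lemma card_image_le_via_factor:
  assumes "finite (g ` A)" and "\<And>a b. a \<in> A \<Longrightarrow> b \<in> A \<Longrightarrow> g a = g b \<Longrightarrow> f a = f b"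
  shows "finite (f ` A)" "card (f ` A) \<le> card (g ` A)"
proof -
  have eq: "f ` A = (f \<circ> inv_into A g) ` (g ` A)" by (rule image_eq_image_via_factor[OF assms(2)])
  show "finite (f ` A)" unfolding eq using assms(1) by simp
  show "card (f ` A) \<le> card (g ` A)" unfolding eq using assms(1) by (rule card_image_le)
qed

lemma factor_inj_if_card_image_eq:
  assumes fin: "finite (g ` A)" and fac: "\<And>a b. a \<in> A \<Longrightarrow> b \<in> A \<Longrightarrow> g a = g b \<Longrightarrow> f a = f b"
    and eq: "card (f ` A) = card (g ` A)" and ab: "a \<in> A" "b \<in> A" "f a = f b"
  shows "g a = g b"
proof -
  let ?\<phi> = "f \<circ> inv_into A g"
  have fA: "f ` A = ?\<phi> ` (g ` A)" by (rule image_eq_image_via_factor[OF fac])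
  then have "inj_on ?\<phi> (g ` A)" using eq fin eq_card_imp_inj_on by metis
  moreover have "?\<phi> (g c) = f c" if "c \<in> A" for c
    using fac inv_into_into f_inv_into_f that by (metis comp_apply image_eqI)
  ultimately show ?thesis using ab by (metis image_eqI inj_onD)
qed

definition right_cosets :: "('v \<Rightarrow> 'v) set \<Rightarrow> ('v \<Rightarrow> 'v) set \<Rightarrow> ('v \<Rightarrow> 'v) set set" where
  "right_cosets H L = (\<lambda>a. (\<lambda>h. h \<circ> a) ` H) ` L"

lemma sg_index_eq_card_right_cosets: "sg_index E K H = card (right_cosets H K)"
  unfolding sg_index_def RCOSETS_def r_coset_def right_cosets_def
  by (simp add: aut_group_def UNION_singleton_eq_range)

abbreviation orbit :: "('v \<Rightarrow> 'v) set \<Rightarrow> 'v \<Rightarrow> 'v set" where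
  "orbit K u \<equiv> (\<lambda>h. h u) ` K"

lemma right_mult_subgroup:
  assumes H: "subgroup H (aut_group E)" and a: "a \<in> H"
  shows "(\<lambda>h. h \<circ> a) ` H = H"
proof
  note HD = subgroup_aut_groupD[OF H]
  show "(\<lambda>h. h \<circ> a) ` H \<subseteq> H" using a HD(3) by auto
  show "H \<subseteq> (\<lambda>h. h \<circ> a) ` H"
  proof
    fix h assume h: "h \<in> H"
    have "h = (h \<circ> fun_inv a) \<circ> a" using HD(1)[OF a] by (auto simp: fun_eq_iff)
    then show "h \<in> (\<lambda>h. h \<circ> a) ` H" using HD(3,4) a h by blast
  qed
qed

lemma left_mult_subgroup:
  assumes H: "subgroup H (aut_group E)" and a: "a \<in> H"
  shows "(\<lambda>h. a \<circ> h) ` H = H"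
proof
  note HD = subgroup_aut_groupD[OF H]
  show "(\<lambda>h. a \<circ> h) ` H \<subseteq> H" using a HD(3) by auto
  show "H \<subseteq> (\<lambda>h. a \<circ> h) ` H"
  proof
    fix h assume h: "h \<in> H"
    have "h = a \<circ> (fun_inv a \<circ> h)" using HD(1)[OF a] by (auto simp: fun_eq_iff)
    then show "h \<in> (\<lambda>h. a \<circ> h) ` H" using HD(3,4) a h by blast
  qed
qed

lemma right_coset_eqD:
  "subgroup H (aut_group E) \<Longrightarrow> (\<lambda>h. h \<circ> a) ` H = (\<lambda>h. h \<circ> b) ` H \<Longrightarrow> \<exists>h\<in>H. a = h \<circ> b"
  using subgroup_aut_groupD(2) by (metis (no_types, lifting) comp_id id_comp image_iff)

lemma right_coset_absorb:
  assumes "subgroup H (aut_group E)" and "h0 \<in> H"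
  shows "(\<lambda>h. h \<circ> (h0 \<circ> b)) ` H = (\<lambda>h. h \<circ> b) ` H"
proof -
  have "(\<lambda>h. h \<circ> (h0 \<circ> b)) ` H = (\<lambda>h. h \<circ> b) ` ((\<lambda>h. h \<circ> h0) ` H)"
    by (simp add: image_image comp_assoc)
  then show ?thesis using right_mult_subgroup[OF assms] by simp
qed

lemma right_cosets_self:
  assumes H: "subgroup H (aut_group E)"
  shows "right_cosets H H = {H}"
proof -
  have "right_cosets H H = (\<lambda>a. H) ` H"
    unfolding right_cosets_def using right_mult_subgroup[OF H] by (intro image_cong) auto
  also have "\<dots> = {H}" using subgroup_aut_groupD(2)[OF H] by auto
  finally show ?thesis .
qed

lemma sg_index_Int_superset:
  assumes "subgroup K (aut_group E)" and "K \<subseteq> C"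
  shows "sg_index E K (K \<inter> C) = 1"
  using right_cosets_self[OF assms(1)] assms(2)
  by (simp add: sg_index_eq_card_right_cosets Int_absorb2)

lemma card_right_cosets_le_subgroup:
  assumes H: "subgroup H (aut_group E)" and H': "subgroup H' (aut_group E)" and sub: "H' \<subseteq> H"
    and fin: "finite (right_cosets H' L)"
  shows "finite (right_cosets H L)" "card (right_cosets H L) \<le> card (right_cosets H' L)"
proof -
  have "(\<lambda>h. h \<circ> a) ` H = (\<lambda>h. h \<circ> b) ` H"
    if "a \<in> L" "b \<in> L" and eq: "(\<lambda>h. h \<circ> a) ` H' = (\<lambda>h. h \<circ> b) ` H'" for a b
  proof -
    obtain h0 where h0: "h0 \<in> H'" "a = h0 \<circ> b" using right_coset_eqD[OF H' eq] by blast
    then have "h0 \<in> H" using sub by blast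
    from right_coset_absorb[OF H this] show ?thesis unfolding h0(2) .
  qed
  note c = card_image_le_via_factor[OF fin[unfolded right_cosets_def] this]
  show "finite (right_cosets H L)" using c(1) unfolding right_cosets_def .
  show "card (right_cosets H L) \<le> card (right_cosets H' L)" using c(2) unfolding right_cosets_def .
qed

lemma card_right_cosets_fixator_le:
  assumes L: "subgroup L (aut_group E)" and F: "finite F" and orb: "\<And>u. u \<in> F \<Longrightarrow> finite (orbit L u)"
  shows "finite (right_cosets (L \<inter> fixator F) L)"
    "card (right_cosets (L \<inter> fixator F) L) \<le> (\<Prod>u\<in>F. card (orbit L u))"
proof -
  note LD = subgroup_aut_groupD[OF L]
  let ?H = "L \<inter> fixator F" and ?P = "Pi\<^sub>E F (orbit L)"
  \<comment> \<open>the coset H a is determined by the values of a^{-1} on F\<close>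
  let ?g = "\<lambda>a. restrict (fun_inv a) F"
  have gP: "?g ` L \<subseteq> ?P" using LD(4) by auto
  have finP: "finite ?P" using F orb by (simp add: finite_PiE)
  have "(\<lambda>h. h \<circ> a) ` ?H = (\<lambda>h. h \<circ> b) ` ?H" if ab: "a \<in> L" "b \<in> L" "?g a = ?g b" for a b
  proof -
    have "fun_inv b v = fun_inv a v" if "v \<in> F" for v using ab(3) that by (metis restrict_apply')
    then have "(a \<circ> fun_inv b) v = v" if "v \<in> F" for v using LD(1)[OF ab(1)] that by simp
    then have "a \<circ> fun_inv b \<in> ?H" using LD(3,4) ab(1,2) by simp
    from right_coset_absorb[OF subgroup_aut_group_Int_fixator[OF L] this, of b]
    have "(\<lambda>h. h \<circ> ((a \<circ> fun_inv b) \<circ> b)) ` ?H = (\<lambda>h. h \<circ> b) ` ?H" .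
    moreover have "(a \<circ> fun_inv b) \<circ> b = a" using LD(1)[OF ab(2)] by (auto simp: fun_eq_iff)
    ultimately show ?thesis by simp
  qed
  note c = card_image_le_via_factor[OF finite_subset[OF gP finP] this]
  show "finite (right_cosets ?H L)" using c(1) unfolding right_cosets_def .
  have "card (right_cosets ?H L) \<le> card (?g ` L)" using c(2) unfolding right_cosets_def .
  also have "\<dots> \<le> card ?P" by (rule card_mono[OF finP gP])
  also have "\<dots> = (\<Prod>u\<in>F. card (orbit L u))" by (rule card_PiE[OF F])
  finally show "card (right_cosets ?H L) \<le> (\<Prod>u\<in>F. card (orbit L u))" .
qed

lemma card_orbit_le_index_mult:
  assumes L: "subgroup L (aut_group E)" and H: "subgroup H (aut_group E)" and sub: "H \<subseteq> L"
    and fin: "finite (right_cosets H L)"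
  shows "card (orbit L w) \<le> card (right_cosets H L) * card (orbit H w)"
proof (cases "finite (orbit H w)")
  case False
  then have "infinite (orbit L w)" using sub by (meson finite_subset image_mono)
  then show ?thesis by simp
next
  case True
  note LD = subgroup_aut_groupD[OF L] and HD = subgroup_aut_groupD[OF H]
  let ?T = "\<lambda>a. fun_inv a ` orbit H w"
  have "?T a = ?T b" if ab: "a \<in> L" "b \<in> L" "(\<lambda>h. h \<circ> a) ` H = (\<lambda>h. h \<circ> b) ` H" for a b
  proof -
    obtain h0 where h0: "h0 \<in> H" "a = h0 \<circ> b" using right_coset_eqD[OF H ab(3)] by blast
    then have "fun_inv a = fun_inv b \<circ> fun_inv h0"
      using o_inv_distrib LD(1)[OF ab(2)] HD(1)[OF h0(1)] by (metis tree_aut_def)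
    then have "?T a = fun_inv b ` orbit ((\<lambda>h. fun_inv h0 \<circ> h) ` H) w" by (auto simp: image_image)
    then show ?thesis using left_mult_subgroup[OF H HD(4)[OF h0(1)]] by simp
  qed
  note cT = card_image_le_via_factor[OF fin[unfolded right_cosets_def] this, folded right_cosets_def]
  have cover: "orbit L w \<subseteq> \<Union> (?T ` L)"
  proof
    fix z assume "z \<in> orbit L w"
    then obtain l where l: "l \<in> L" "z = l w" by blast
    then have "z = fun_inv (fun_inv l) (id w)" using LD(1) by (simp add: inv_inv_eq tree_aut_def)
    then show "z \<in> \<Union> (?T ` L)" using LD(4)[OF l(1)] HD(2) by blast
  qed
  have T: "finite X" "card X \<le> card (orbit H w)" if "X \<in> ?T ` L" for X
    using that True card_image_le by auto
  have "card (orbit L w) \<le> card (\<Union> (?T ` L))"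
    using cover cT(1) T(1) by (intro card_mono) auto
  also have "\<dots> \<le> sum card (?T ` L)" by (rule card_Union_le_sum_card)
  also have "\<dots> \<le> card (?T ` L) * card (orbit H w)"
    using sum_bounded_above[of "?T ` L" card] T(2) by simp
  also have "\<dots> \<le> card (right_cosets H L) * card (orbit H w)" by (rule mult_le_mono1[OF cT(2)])
  finally show ?thesis .
qed

section \<open>Geodesics and ends\<close>

text \<open>A non-backtracking walk f 0, \<dots>, f m; in a tree these are exactly the geodesic segments.\<close>
definition geodesic :: "('v \<Rightarrow> 'v \<Rightarrow> bool) \<Rightarrow> (nat \<Rightarrow> 'v) \<Rightarrow> nat \<Rightarrow> bool" where
  "geodesic E f m \<longleftrightarrow> (\<forall>i<m. E (f i) (f (Suc i))) \<and> (\<forall>i. i + 2 \<le> m \<longrightarrow> f i \<noteq> f (i + 2))"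

lemma geodesic_mono: "geodesic E f m \<Longrightarrow> k \<le> m \<Longrightarrow> geodesic E f k"
  by (simp add: geodesic_def)

lemma is_ray_geodesic: "is_ray E r \<Longrightarrow> geodesic E r m"
  by (simp add: is_ray_def geodesic_def)

lemma tree_aut_geodesic: "tree_aut E h \<Longrightarrow> geodesic E f m \<Longrightarrow> geodesic E (h \<circ> f) m"
  by (simp add: geodesic_def tree_aut_adj tree_aut_eq_iff)

lemma tree_aut_is_ray: "tree_aut E h \<Longrightarrow> is_ray E r \<Longrightarrow> is_ray E (h \<circ> r)"
  by (simp add: is_ray_def tree_aut_adj tree_aut_eq_iff)

lemma tree_geodesic_not_closed:
  assumes "is_tree E" and "m \<ge> 1" and "geodesic E f m"
  shows "f 0 \<noteq> f m"
proof -
  let ?L = "map f [0..<Suc m]"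
  have "is_walk E ?L" "non_backtracking ?L" "length ?L \<ge> 2"
    using assms(2,3) unfolding is_walk_def non_backtracking_def geodesic_def
    by (auto simp del: upt_Suc simp: nth_map_upt)
  then have "hd ?L \<noteq> last ?L" using assms(1) unfolding is_tree_def by blast
  then show ?thesis by (simp del: upt_Suc add: hd_map hd_upt last_map)
qed

lemma geodesic_join:
  assumes sym: "\<And>u v. E u v \<Longrightarrow> E v u"
    and f: "geodesic E f m" and f': "geodesic E f' m'" and ends: "f m = f' m'"
    and turn: "m = 0 \<or> m' = 0 \<or> f (m - 1) \<noteq> f' (m' - 1)"
  shows "geodesic E (\<lambda>i. if i \<le> m then f i else f' (m + m' - i)) (m + m')"
  unfolding geodesic_def
proof (intro conjI allI impI)
  let ?F = "\<lambda>i. if i \<le> m then f i else f' (m + m' - i)"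
  fix i
  assume i: "i < m + m'"
  consider "Suc i \<le> m" | "i = m" | "i > m" by linarith
  then show "E (?F i) (?F (Suc i))"
  proof cases
    case 3
    then have "m + m' - i = Suc (m + m' - Suc i)" using i by simp
    then show ?thesis using f' i 3 sym by (auto simp: geodesic_def)
  next
    case 2
    then obtain j where "m' = Suc j" using i by (cases m') auto
    then show ?thesis using f' ends 2 sym by (auto simp: geodesic_def)
  qed (use f in \<open>auto simp: geodesic_def\<close>)
next
  let ?F = "\<lambda>i. if i \<le> m then f i else f' (m + m' - i)"
  fix i
  assume i: "i + 2 \<le> m + m'"
  consider "i + 2 \<le> m" | "i + 1 = m" | "i = m" | "i > m" by linarith
  then show "?F i \<noteq> ?F (i + 2)"
  proof cases
    case 3
    then have "f' (m' - 2) \<noteq> f' (m' - 2 + 2)" using f' i by (simp add: geodesic_def)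
    moreover have "m' - 2 + 2 = m'" using 3 i by simp
    ultimately show ?thesis using 3 ends by auto
  next
    case 4
    define j where "j = m + m' - (i + 2)"
    have j: "j + 2 \<le> m'" "m + m' - i = j + 2" using i 4 by (auto simp: j_def)
    then have "f' j \<noteq> f' (j + 2)" using f' by (simp add: geodesic_def)
    then show ?thesis using 4 j(2) by (simp add: j_def)
  qed (use f turn i in \<open>auto simp: geodesic_def\<close>)
qed

lemma tree_geodesics_same_last_step:
  assumes t: "is_tree E" and f: "geodesic E f m" and f': "geodesic E f' m'"
    and "f 0 = f' 0" and "f m = f' m'" and "m + m' \<ge> 1"
  shows "m \<noteq> 0 \<and> m' \<noteq> 0 \<and> f (m - 1) = f' (m' - 1)"
proof (rule ccontr)
  assume "\<not> ?thesis"
  \<comment> \<open>then f followed by f' backwards would be a closed non-backtracking walk\<close>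
  then have "geodesic E (\<lambda>i. if i \<le> m then f i else f' (m + m' - i)) (m + m')"
    using t assms(5) by (intro geodesic_join[OF _ f f']) (auto simp: is_tree_def)
  from tree_geodesic_not_closed[OF t assms(6) this] show False
    using assms(4,5) by (cases "m' = 0") auto
qed

lemma tree_geodesic_unique:
  assumes t: "is_tree E"
  shows "geodesic E f m \<Longrightarrow> geodesic E f' m' \<Longrightarrow> f 0 = f' 0 \<Longrightarrow> f m = f' m'
    \<Longrightarrow> m = m' \<and> (\<forall>i\<le>m. f i = f' i)"
proof (induction m arbitrary: m')
  case 0
  then show ?case using tree_geodesics_same_last_step[OF t, of f 0 f' m'] by fastforce
next
  case (Suc k)
  then obtain k' where k': "m' = Suc k'" "f k = f' k'"
    using tree_geodesics_same_last_step[OF t, of f "Suc k" f' m'] by (cases m') auto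
  then have "k = k' \<and> (\<forall>i\<le>k. f i = f' i)"
    using Suc.IH[of k'] Suc.prems geodesic_mono by (metis le_add2 plus_1_eq_Suc)
  then show ?case using Suc.prems k' by (auto simp: le_Suc_eq)
qed

lemma tree_aut_fixes_ray_segment:
  assumes t: "is_tree E" and r: "is_ray E r" and h: "tree_aut E h"
    and "h (r 0) = r 0" and "h (r m) = r m" and "i \<le> m"
  shows "h (r i) = r i"
  using tree_geodesic_unique[OF t tree_aut_geodesic[OF h is_ray_geodesic[OF r]] is_ray_geodesic[OF r]]
    assms(4-6) by simp

lemma ray_in_ray_class: "is_ray E r \<Longrightarrow> r \<in> ray_class E r"
  unfolding ray_class_def by (auto intro: exI[of _ 0])

lemma tree_aut_fixes_ray:
  assumes t: "is_tree E" and r: "is_ray E r" and h: "tree_aut E h"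
    and end_fixed: "h \<circ> r \<in> ray_class E r" and base_fixed: "h (r 0) = r 0"
  shows "h (r n) = r n"
proof -
  obtain k m where km: "\<And>n. h (r (n + k)) = r (n + m)"
    using end_fixed unfolding ray_class_def by auto
  have "k = m \<and> (\<forall>i\<le>k. h (r i) = r i)"
    using tree_geodesic_unique[OF t tree_aut_geodesic[OF h is_ray_geodesic[OF r]]
        is_ray_geodesic[OF r], of k m] base_fixed km[of 0] by simp
  then show ?thesis using km[of "n - k"] by (cases "n \<le> k") auto
qed

lemma end_action_ray_class:
  assumes h: "tree_aut E h" and r: "is_ray E r"
  shows "end_action h (ray_class E r) = ray_class E (h \<circ> r)"
proof (intro equalityI subsetI)
  fix t assume "t \<in> end_action h (ray_class E r)"
  then obtain s k m where "t = h \<circ> s" "is_ray E s" "\<And>n. s (n + k) = r (n + m)"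
    unfolding end_action_def ray_class_def by auto
  then show "t \<in> ray_class E (h \<circ> r)"
    unfolding ray_class_def using tree_aut_is_ray[OF h]
    by (intro CollectI conjI exI[of _ k] exI[of _ m]) auto
next
  fix s assume "s \<in> ray_class E (h \<circ> r)"
  then obtain k m where km: "\<And>n. s (n + k) = h (r (n + m))" and s: "is_ray E s"
    unfolding ray_class_def by auto
  have "\<forall>n. (fun_inv h \<circ> s) (n + k) = r (n + m)" using km h by simp
  then have "fun_inv h \<circ> s \<in> ray_class E r"
    unfolding ray_class_def using tree_aut_is_ray[OF tree_aut_inv[OF h] s] by blast
  moreover have "s = h \<circ> (fun_inv h \<circ> s)" using h by (auto simp: fun_eq_iff)
  ultimately show "s \<in> end_action h (ray_class E r)" unfolding end_action_def by blast
qed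

lemma end_action_comp: "end_action (a \<circ> b) X = end_action a (end_action b X)"
  unfolding end_action_def by (auto simp: image_comp comp_assoc)

lemma end_action_id: "end_action id X = X"
  unfolding end_action_def by simp

lemma end_action_fixes_ray_class:
  "tree_aut E h \<Longrightarrow> is_ray E r \<Longrightarrow> (\<And>n. h (r n) = r n) \<Longrightarrow> end_action h (ray_class E r) = ray_class E r"
  by (metis comp_apply end_action_ray_class ext)

section \<open>The topology of pointwise convergence\<close>

lemma topspace_pw_top [simp]: "topspace pw_top = UNIV"
  by (simp add: pw_top_def topspace_product_topology PiE_UNIV_domain)

lemma continuous_map_pw_top_eval: "continuous_map pw_top (discrete_topology UNIV) (\<lambda>f. f v)"
  unfolding pw_top_def by (rule continuous_map_product_projection) simp

lemma openin_pw_top_eval_eq: "openin pw_top {f. f v = a}"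
  using openin_continuous_map_preimage[OF continuous_map_pw_top_eval, of "{a}" v] by simp

lemma openin_pw_top_eval2: "openin pw_top {f. P (f u) (f v)}"
proof -
  have "{f. P (f u) (f v)} = \<Union> {{f. f u = a} \<inter> {f. f v = b} | a b. P a b}" by auto
  moreover have "openin pw_top (\<Union> {{f. f u = a} \<inter> {f. f v = b} | a b. P a b})"
    by (rule openin_Union) (auto intro!: openin_Int openin_pw_top_eval_eq)
  ultimately show ?thesis by simp
qed

lemma closedin_pw_top_eval2: "closedin pw_top {f. P (f u) (f v)}"
  using openin_pw_top_eval2[of "\<lambda>a b. \<not> P a b" u v]
  unfolding closedin_def by (simp add: Compl_eq_Diff_UNIV[symmetric] Collect_neg_eq)

lemma closedin_pw_top_eval_eq: "closedin pw_top {f. f v = a}"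
  using closedin_pw_top_eval2[where P="\<lambda>b c. b = a" and u=v and v=v] by simp

lemma openin_pw_top_agree:
  assumes "finite F" shows "openin pw_top {f. \<forall>v\<in>F. f v = c v}"
proof -
  have "openin pw_top ((\<Inter>v\<in>F. {f. f v = c v}) \<inter> topspace pw_top)"
    using assms by (intro openin_INT openin_pw_top_eval_eq)
  moreover have "(\<Inter>v\<in>F. {f. f v = c v}) \<inter> topspace pw_top = {f. \<forall>v\<in>F. f v = c v}" by auto
  ultimately show ?thesis by simp
qed

lemma closedin_pw_top_hits:
  assumes "finite R" shows "closedin pw_top {f. \<exists>v\<in>R. f v = w}"
proof -
  have "openin pw_top ((\<Inter>v\<in>R. {f. f v \<noteq> w}) \<inter> topspace pw_top)"
    using assms by (intro openin_INT openin_pw_top_eval2[where P="\<lambda>a b. a \<noteq> w"])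
  moreover have "(\<Inter>v\<in>R. {f. f v \<noteq> w}) \<inter> topspace pw_top = UNIV - {f. \<exists>v\<in>R. f v = w}" by auto
  ultimately show ?thesis unfolding closedin_def by simp
qed

lemma subtopology_aut_top:
  "G \<subseteq> carrier (aut_group E) \<Longrightarrow> subtopology (aut_top E) G = subtopology pw_top G"
  unfolding aut_top_def by (simp add: subtopology_subtopology Int_absorb1 inf.absorb_iff2)

text \<open>Translating by an element f of S moves the basic neighbourhood of id into one of f.\<close>
lemma openin_if_fixator_subset:
  assumes G: "subgroup G (aut_group E)" and SG: "S \<subseteq> G"
    and comp: "\<And>a b. a \<in> S \<Longrightarrow> b \<in> S \<Longrightarrow> a \<circ> b \<in> S"
    and F: "finite F" and fixed: "G \<inter> fixator F \<subseteq> S"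
  shows "openin (subtopology (aut_top E) G) S"
proof -
  note GD = subgroup_aut_groupD[OF G]
  have Gc: "G \<subseteq> carrier (aut_group E)" using GD(1) by auto
  show ?thesis unfolding subtopology_aut_top[OF Gc] openin_subopen[of _ S]
  proof (intro ballI exI conjI)
    fix f assume f: "f \<in> S"
    then have fG: "f \<in> G" using SG by auto
    let ?T = "G \<inter> {h. \<forall>v\<in>F. h v = f v}"
    show "openin (subtopology pw_top G) ?T"
      by (rule openin_subtopology_Int2[OF openin_pw_top_agree[OF F]])
    show "f \<in> ?T" using fG by simp
    show "?T \<subseteq> S"
    proof
      fix h assume h: "h \<in> ?T"
      have "fun_inv f \<circ> h \<in> G \<inter> fixator F" using GD(1)[OF fG] GD(3,4) fG h by auto
      then have "f \<circ> (fun_inv f \<circ> h) \<in> S" using comp f fixed by blast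
      moreover have "f \<circ> (fun_inv f \<circ> h) = h" using GD(1)[OF fG] by (auto simp: fun_eq_iff)
      ultimately show "h \<in> S" by simp
    qed
  qed
qed

lemma fixator_subset_if_openin:
  assumes G: "G \<subseteq> carrier (aut_group E)" and S: "openin (subtopology (aut_top E) G) S"
    and "id \<in> S"
  obtains F where "finite F" "G \<inter> fixator F \<subseteq> S"
proof -
  obtain T where T: "openin pw_top T" "S = T \<inter> G"
    using S unfolding subtopology_aut_top[OF G] openin_subtopology by blast
  then obtain U where U: "finite {i. U i \<noteq> UNIV}" "id \<in> Pi\<^sub>E UNIV U" "Pi\<^sub>E UNIV U \<subseteq> T"
    using \<open>id \<in> S\<close> unfolding pw_top_def openin_product_topology_alt by fastforce
  have "h \<in> Pi\<^sub>E UNIV U" if "h \<in> fixator {i. U i \<noteq> UNIV}" for h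
    using that U(2) by (force simp: PiE_UNIV_domain)
  then have "G \<inter> fixator {i. U i \<noteq> UNIV} \<subseteq> S" using U(3) T(2) by blast
  with U(1) show ?thesis by (rule that)
qed

lemma finite_orbit_if_compactin:
  assumes "compactin (aut_top E) K"
  shows "finite (orbit K u)"
proof -
  have "continuous_map (aut_top E) (discrete_topology UNIV) (\<lambda>h. h u)"
    unfolding aut_top_def by (rule continuous_map_from_subtopology[OF continuous_map_pw_top_eval])
  from image_compactin[OF assms this] show ?thesis by (simp add: compactin_discrete_topology)
qed

primrec vertex_ball :: "('v \<Rightarrow> 'v \<Rightarrow> bool) \<Rightarrow> 'v \<Rightarrow> nat \<Rightarrow> 'v set" where
  "vertex_ball E v0 0 = {v0}"
| "vertex_ball E v0 (Suc n) = vertex_ball E v0 n \<union> (\<Union>u\<in>vertex_ball E v0 n. {w. E u w})"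

lemma finite_vertex_ball: "locally_finite E \<Longrightarrow> finite (vertex_ball E v0 n)"
  by (induction n) (auto simp: locally_finite_def)

lemma tree_aut_vertex_ball:
  "tree_aut E h \<Longrightarrow> h v0 = v0 \<Longrightarrow> w \<in> vertex_ball E v0 n \<Longrightarrow> h w \<in> vertex_ball E v0 n"
  by (induction n arbitrary: w) (auto simp: tree_aut_adj, metis tree_aut_adj)

lemma tree_in_vertex_ball:
  assumes "is_tree E" shows "\<exists>n. w \<in> vertex_ball E v0 n"
proof -
  have "(v0, w) \<in> {(a, b). E a b}\<^sup>*" using assms by (simp add: is_tree_def)
  then show ?thesis
  proof (induction rule: rtrancl_induct)
    case base
    have "v0 \<in> vertex_ball E v0 0" by simp
    then show ?case ..
  next
    case (step y z)
    then obtain n where "y \<in> vertex_ball E v0 n" by blast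
    then have "z \<in> vertex_ball E v0 (Suc n)" using step(2) by auto
    then show ?case ..
  qed
qed

definition ball_radius :: "('v \<Rightarrow> 'v \<Rightarrow> bool) \<Rightarrow> 'v \<Rightarrow> 'v \<Rightarrow> nat" where
  "ball_radius E v0 w = (SOME n. w \<in> vertex_ball E v0 n)"

lemma in_vertex_ball_radius: "is_tree E \<Longrightarrow> w \<in> vertex_ball E v0 (ball_radius E v0 w)"
  unfolding ball_radius_def by (rule someI_ex[OF tree_in_vertex_ball])

text \<open>Surjectivity is a closed condition here: under an automorphism fixing v0, every
  preimage of w lies in the finite set vertex_ball E v0 (ball_radius E v0 w).\<close>
lemma vertex_stabilizer_eq_Int:
  assumes t: "is_tree E"
  shows "{f. tree_aut E f \<and> f v0 = v0} =
    {f. f v0 = v0} \<inter> (\<Inter>p. {f. E (f (fst p)) (f (snd p)) = E (fst p) (snd p)}) \<inter>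
    (\<Inter>p. {f. f (fst p) = f (snd p) \<longrightarrow> fst p = snd p}) \<inter>
    (\<Inter>w. {f. \<exists>v\<in>vertex_ball E v0 (ball_radius E v0 w). f v = w})"
    (is "?A = ?B")
proof
  show "?A \<subseteq> ?B"
  proof
    fix f assume "f \<in> ?A"
    then have f: "tree_aut E f" "f v0 = v0" by auto
    have "fun_inv f v0 = v0" using tree_aut_inv_f[OF f(1), of v0] f(2) by simp
    then have "\<exists>v\<in>vertex_ball E v0 (ball_radius E v0 w). f v = w" for w
      using tree_aut_vertex_ball[OF tree_aut_inv[OF f(1)] _ in_vertex_ball_radius[OF t]] f(1) by force
    then show "f \<in> ?B" using f by (auto simp: tree_aut_adj tree_aut_eq_iff)
  qed
  show "?B \<subseteq> ?A"
  proof
    fix f assume f: "f \<in> ?B"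
    then have "inj f" "surj f" by (auto intro: injI) (metis rangeI)
    then show "f \<in> ?A" using f by (simp add: tree_aut_def bij_def)
  qed
qed

lemma closedin_vertex_stabilizer:
  assumes "is_tree E" and lf: "locally_finite E"
  shows "closedin pw_top {f. tree_aut E f \<and> f v0 = v0}"
  unfolding vertex_stabilizer_eq_Int[OF assms(1)]
  by (intro closedin_Int closedin_INT)
    (auto intro: closedin_pw_top_hits[OF finite_vertex_ball[OF lf]]
      closedin_pw_top_eval_eq
      closedin_pw_top_eval2[where P="\<lambda>a b. E a b = E _ _"]
      closedin_pw_top_eval2[where P="\<lambda>a b. a = b \<longrightarrow> _"])

lemma compactin_fixator:
  assumes t: "is_tree E" and lf: "locally_finite E" and G: "closed_subgroup E G" and "v0 \<in> P"
  shows "compactin (aut_top E) (G \<inter> fixator P)"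
proof -
  have GD: "\<And>h. h \<in> G \<Longrightarrow> tree_aut E h"
    using subgroup_aut_groupD(1) G unfolding closed_subgroup_def by blast
  obtain C where C: "closedin pw_top C" "G = C \<inter> carrier (aut_group E)"
    using G unfolding closed_subgroup_def aut_top_def closedin_subtopology by blast
  let ?ball = "\<lambda>v. vertex_ball E v0 (ball_radius E v0 v)"
  have "compactin pw_top (Pi\<^sub>E UNIV ?ball)" unfolding pw_top_def compactin_PiE
    by (simp add: compactin_discrete_topology finite_vertex_ball[OF lf])
  moreover have sub: "G \<inter> fixator P \<subseteq> Pi\<^sub>E UNIV ?ball"
    using tree_aut_vertex_ball[OF GD] in_vertex_ball_radius[OF t] \<open>v0 \<in> P\<close>
    by (auto simp: PiE_UNIV_domain)
  moreover have "G \<inter> fixator P = C \<inter> {f. tree_aut E f \<and> f v0 = v0} \<inter> (\<Inter>v\<in>P. {f. f v = v})"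
    using C(2) \<open>v0 \<in> P\<close> by auto
  then have "closedin pw_top (G \<inter> fixator P)"
    using \<open>v0 \<in> P\<close>
    by (auto intro!: closedin_Int closedin_INT C(1) closedin_vertex_stabilizer[OF t lf]
        closedin_pw_top_eval_eq)
  ultimately have "compactin pw_top (G \<inter> fixator P)" using closed_compactin by blast
  then show ?thesis unfolding aut_top_def compactin_subtopology using GD by auto
qed

section \<open>A hyperbolic element translating along a ray\<close>

locale ray_translation =
  fixes E :: "'v \<Rightarrow> 'v \<Rightarrow> bool" and G :: "('v \<Rightarrow> 'v) set" and g :: "'v \<Rightarrow> 'v"
    and r :: "nat \<Rightarrow> 'v" and k :: nat
  assumes tree: "is_tree E" and lf: "locally_finite E" and G: "closed_subgroup E G"
    and g_in_G: "g \<in> G" and ray: "is_ray E r" and k_pos: "k > 0"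
    and translates: "\<And>n. g (r n) = r (n + k)"
begin

abbreviation "\<xi> \<equiv> ray_class E r"

lemma subgroup_G: "subgroup G (aut_group E)"
  using G by (simp add: closed_subgroup_def)

lemmas GD = subgroup_aut_groupD[OF subgroup_G]

lemma tree_aut_g_funpow: "tree_aut E (g ^^ n)"
  using tree_aut_funpow[OF GD(1)[OF g_in_G]] .

lemma g_funpow_in_G: "g ^^ n \<in> G"
proof (induction n)
  case 0
  show ?case unfolding funpow.simps(1) by (rule GD(2))
next
  case (Suc n)
  show ?case unfolding funpow.simps(2) by (rule GD(3)[OF g_in_G Suc.IH])
qed

lemma g_funpow_ray: "(g ^^ n) (r m) = r (m + n * k)"
  by (induction n arbitrary: m) (simp_all add: translates algebra_simps)

lemma conj_pow_g_eq: "conj_pow E g n K = (\<lambda>h. (g ^^ n) \<circ> h \<circ> fun_inv (g ^^ n)) ` K"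
  using conj_pow_eq[OF GD(1)[OF g_in_G]] .

lemma conj_pow_g_conj:
  "tree_aut E h \<Longrightarrow> h = (g ^^ n) \<circ> (fun_inv (g ^^ n) \<circ> h \<circ> (g ^^ n)) \<circ> fun_inv (g ^^ n)"
  using tree_aut_g_funpow[of n] by (auto simp: fun_eq_iff)

lemma subgroup_end_stabilizer: "subgroup (end_stabilizer G \<xi>) (aut_group E)"
  unfolding subgroup_aut_group_iff end_stabilizer_def
proof (intro conjI ballI)
  fix a assume a: "a \<in> {h \<in> G. end_action h \<xi> = \<xi>}"
  have "tree_aut E a" using GD(1) a by blast
  then have "fun_inv a \<circ> a = id" by (auto simp: fun_eq_iff)
  then have "end_action (fun_inv a) \<xi> = \<xi>"
    using a end_action_comp[of "fun_inv a" a \<xi>] by (simp add: end_action_id)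
  then show "fun_inv a \<in> {h \<in> G. end_action h \<xi> = \<xi>}" using GD(4) a by auto
qed (auto simp: GD end_action_comp end_action_id)

lemma end_stabilizer_fixes_ray:
  assumes h: "h \<in> end_stabilizer G \<xi>" and "h (r 0) = r 0"
  shows "h (r n) = r n"
proof -
  have "h \<circ> r \<in> \<xi>"
    using h ray_in_ray_class[OF ray] unfolding end_stabilizer_def end_action_def by blast
  then show ?thesis using tree_aut_fixes_ray[OF tree ray] GD(1) h assms(2)
    unfolding end_stabilizer_def by blast
qed

lemma compact_open_subgroupD:
  assumes "compact_open_subgroup E G L"
  shows "subgroup L (aut_group E)" "L \<subseteq> G" "openin (subtopology (aut_top E) G) L"
    "finite (orbit L u)"
  using assms finite_orbit_if_compactin[of E L] unfolding compact_open_subgroup_def by blast+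

lemma compact_open_subgroup_fixator:
  assumes "v0 \<in> P" and "finite P"
  shows "compact_open_subgroup E G (G \<inter> fixator P)"
proof -
  note H = subgroup_aut_group_Int_fixator[OF subgroup_G, of P]
  have "openin (subtopology (aut_top E) G) (G \<inter> fixator P)"
    using subgroup_aut_groupD(3)[OF H]
    by (intro openin_if_fixator_subset[OF subgroup_G _ _ assms(2)]) auto
  then show ?thesis
    unfolding compact_open_subgroup_def using H compactin_fixator[OF tree lf G assms(1)] by blast
qed

lemma fixator_subset_if_open:
  assumes "openin (subtopology (aut_top E) G) S" and "subgroup S (aut_group E)"
  obtains F where "finite F" "G \<inter> fixator F \<subseteq> S"
proof -
  have "G \<subseteq> carrier (aut_group E)" using GD(1) by auto
  from fixator_subset_if_openin[OF this assms(1) subgroup_aut_groupD(2)[OF assms(2)]]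
  show ?thesis using that .
qed

definition ray_fixator :: "('v \<Rightarrow> 'v) set" where
  "ray_fixator = G \<inter> fixator (range r)"

lemma compactin_ray_fixator: "compactin (aut_top E) ray_fixator"
  unfolding ray_fixator_def by (rule compactin_fixator[OF tree lf G rangeI])

text \<open>g^n maps the ray into itself: this is where the direction of translation enters.\<close>
lemma conj_inv_ray_fixator:
  assumes "h \<in> ray_fixator"
  shows "fun_inv (g ^^ n) \<circ> h \<circ> (g ^^ n) \<in> ray_fixator"
proof -
  have "fun_inv (g ^^ n) \<circ> h \<circ> (g ^^ n) \<in> G"
    using assms GD(3,4) g_funpow_in_G unfolding ray_fixator_def by blast
  moreover have "(fun_inv (g ^^ n) \<circ> h \<circ> (g ^^ n)) (r m) = r m" for m
    using assms tree_aut_inv_f[OF tree_aut_g_funpow, of n "r m"]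
    unfolding ray_fixator_def by (simp add: g_funpow_ray)
  ultimately show ?thesis unfolding ray_fixator_def by auto
qed

lemma orbit_conj_pow_g:
  "orbit (conj_pow E g n K) (r (n * k)) = (g ^^ n) ` orbit K (r 0)"
proof -
  have "fun_inv (g ^^ n) (r (n * k)) = r 0"
    using tree_aut_inv_f[OF tree_aut_g_funpow, of n "r 0"] by (simp add: g_funpow_ray)
  then show ?thesis unfolding conj_pow_g_eq by (simp add: image_image)
qed

lemma subgroup_Int_conj_pow:
  assumes "subgroup L (aut_group E)"
  shows "subgroup (L \<inter> conj_pow E g n L) (aut_group E)"
  unfolding conj_pow_g_eq
  by (rule group.subgroups_Inter_pair[OF group_aut_group assms
        subgroup_aut_group_conj[OF assms tree_aut_g_funpow]])

lemma index_conj_pow_le: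
  assumes L: "compact_open_subgroup E G L"
  obtains F where "finite F"
    "\<And>n. finite (right_cosets (L \<inter> conj_pow E g n L) L)"
    "\<And>n. card (right_cosets (L \<inter> conj_pow E g n L) L) \<le> (\<Prod>u\<in>F. card (orbit L ((g ^^ n) u)))"
proof -
  note LD = compact_open_subgroupD[OF L] and LsD = subgroup_aut_groupD[OF compact_open_subgroupD(1)[OF L]]
  obtain F where F: "finite F" "G \<inter> fixator F \<subseteq> L" using fixator_subset_if_open[OF LD(3,1)] .
  have "finite (right_cosets (L \<inter> conj_pow E g n L) L) \<and>
      card (right_cosets (L \<inter> conj_pow E g n L) L) \<le> (\<Prod>u\<in>F. card (orbit L ((g ^^ n) u)))" for n
  proof -
    let ?H = "L \<inter> fixator ((g ^^ n) ` F)"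
    have sub: "?H \<subseteq> L \<inter> conj_pow E g n L"
    proof
      fix h assume h: "h \<in> ?H"
      let ?k = "fun_inv (g ^^ n) \<circ> h \<circ> (g ^^ n)"
      have "?k \<in> G" using GD(3,4) g_funpow_in_G h LD(2) by blast
      moreover have "?k \<in> fixator F" using h tree_aut_inv_f[OF tree_aut_g_funpow] by simp
      ultimately have "?k \<in> L" using F(2) by blast
      then show "h \<in> L \<inter> conj_pow E g n L"
        using h conj_pow_g_conj[OF LsD(1), of h n] unfolding conj_pow_g_eq by blast
    qed
    have fF: "finite ((g ^^ n) ` F)" using F(1) by simp
    note fix_bound = card_right_cosets_fixator_le[OF LD(1) fF LD(4)]
    note mono = card_right_cosets_le_subgroup[OF subgroup_Int_conj_pow[OF LD(1)]
        subgroup_aut_group_Int_fixator[OF LD(1)] sub fix_bound(1)]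
    have inj: "inj_on (g ^^ n) F"
      using tree_aut_g_funpow[of n] by (auto simp: tree_aut_def bij_def intro: inj_on_subset)
    have "card (right_cosets (L \<inter> conj_pow E g n L) L) \<le>
        (\<Prod>u\<in>(g ^^ n) ` F. card (orbit L u))"
      using mono(2) fix_bound(2) by (rule le_trans)
    also have "\<dots> = (\<Prod>u\<in>F. card (orbit L ((g ^^ n) u)))" by (simp add: prod.reindex[OF inj])
    finally show ?thesis using mono(1) by blast
  qed
  with F(1) show ?thesis using that by blast
qed

lemma subgroup_ray_fixator: "subgroup ray_fixator (aut_group E)"
  unfolding ray_fixator_def by (rule subgroup_aut_group_Int_fixator[OF subgroup_G])

lemma ray_fixator_subset_conj_pow: "ray_fixator \<subseteq> conj_pow E g n ray_fixator"
proof
  fix h assume h: "h \<in> ray_fixator"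
  then have "tree_aut E h" using subgroup_aut_groupD(1)[OF subgroup_ray_fixator] by blast
  from conj_pow_g_conj[OF this] show "h \<in> conj_pow E g n ray_fixator"
    using conj_inv_ray_fixator[OF h] unfolding conj_pow_g_eq by blast
qed

lemma compact_open_ray_fixator:
  assumes "openin (subtopology (aut_top E) G) (end_stabilizer G \<xi>)"
  shows "compact_open_subgroup E G ray_fixator"
proof -
  obtain F where F: "finite F" "G \<inter> fixator F \<subseteq> end_stabilizer G \<xi>"
    using fixator_subset_if_open[OF assms subgroup_end_stabilizer] .
  have "G \<inter> fixator (insert (r 0) F) \<subseteq> ray_fixator"
    using F(2) end_stabilizer_fixes_ray unfolding ray_fixator_def by auto
  then have "openin (subtopology (aut_top E) G) ray_fixator"
    using subgroup_aut_groupD(3)[OF subgroup_ray_fixator] F(1)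
    by (intro openin_if_fixator_subset[OF subgroup_G]) (auto simp: ray_fixator_def)
  then show ?thesis unfolding compact_open_subgroup_def
    using subgroup_ray_fixator compactin_ray_fixator by (auto simp: ray_fixator_def)
qed

lemma base_fixing_agree_along_ray:
  assumes "tree_aut E h" "tree_aut E h'" "h (r 0) = r 0" "h' (r 0) = r 0"
    and "h (r m') = h' (r m')" and "m \<le> m'"
  shows "h (r m) = h' (r m)"
proof -
  let ?q = "fun_inv h' \<circ> h"
  have q: "tree_aut E ?q" using tree_aut_comp[OF tree_aut_inv[OF assms(2)] assms(1)] .
  have "?q (r 0) = r 0" using tree_aut_inv_f[OF assms(2), of "r 0"] assms(3,4) by simp
  moreover have "?q (r m') = r m'" using tree_aut_inv_f[OF assms(2), of "r m'"] assms(5) by simp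
  ultimately have "?q (r m) = r m" by (rule tree_aut_fixes_ray_segment[OF tree ray q _ _ assms(6)])
  then have "h' (?q (r m)) = h' (r m)" by simp
  then show ?thesis using assms(2) by simp
qed

context
  fixes K :: "('v \<Rightarrow> 'v) set"
  assumes K: "subgroup K (aut_group E)" and K_base: "K \<subseteq> fixator {r 0}"
    and K_orbits: "\<And>u. finite (orbit K u)"
begin

lemma orbit_ray_factor:
  assumes "a \<in> K" "b \<in> K" "a (r m') = b (r m')" "m \<le> m'"
  shows "a (r m) = b (r m)"
proof (rule base_fixing_agree_along_ray)
  show "tree_aut E a" "tree_aut E b" using subgroup_aut_groupD(1)[OF K] assms(1,2) by auto
  show "a (r 0) = r 0" "b (r 0) = r 0" using K_base assms(1,2) by auto
qed (use assms(3,4) in auto)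

lemma card_orbit_ray_mono:
  assumes "m \<le> m'" shows "card (orbit K (r m)) \<le> card (orbit K (r m'))"
  by (rule card_image_le_via_factor(2)[OF K_orbits]) (rule orbit_ray_factor[OF _ _ _ assms])

text \<open>Once the orbit sizes along the ray stop growing, the orbit maps are bijective,
  so fixing r M forces fixing r m.\<close>
lemma fixes_ray_if_card_orbit_eq:
  assumes "card (orbit K (r m)) = card (orbit K (r M))" and "M \<le> m"
    and "h \<in> K" and "h (r M) = r M"
  shows "h (r m) = r m"
proof -
  have "h (r m) = id (r m)"
  proof (rule factor_inj_if_card_image_eq[of "\<lambda>h. h (r m)" K "\<lambda>h. h (r M)" h id, OF K_orbits])
    show "a (r M) = b (r M)" if "a \<in> K" "b \<in> K" "a (r m) = b (r m)" for a b
      by (rule orbit_ray_factor[OF that assms(2)])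
  qed (use assms subgroup_aut_groupD(2)[OF K] in auto)
  then show ?thesis by simp
qed

end

lemma card_orbit_translate_le:
  assumes K: "compact_open_subgroup E G K" and B: "\<And>n. sg_index E K (K \<inter> conj_pow E g n K) \<le> B"
  shows "card (orbit K (r (n * k))) \<le> B * card (orbit K (r 0))"
proof -
  note KD = compact_open_subgroupD[OF K]
  obtain F where "finite F" "\<And>n. finite (right_cosets (K \<inter> conj_pow E g n K) K)"
    and "\<And>n. card (right_cosets (K \<inter> conj_pow E g n K) K) \<le> (\<Prod>u\<in>F. card (orbit K ((g ^^ n) u)))"
    by (rule index_conj_pow_le[OF K]) (rule that)
  moreover note C = subgroup_Int_conj_pow[OF KD(1), of n]
  ultimately have "card (orbit K (r (n * k))) \<le>
      card (right_cosets (K \<inter> conj_pow E g n K) K) * card (orbit (K \<inter> conj_pow E g n K) (r (n * k)))"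
    by (intro card_orbit_le_index_mult[OF KD(1) C]) auto
  also have "\<dots> \<le> B * card (orbit (conj_pow E g n K) (r (n * k)))"
  proof (rule mult_le_mono)
    show "card (right_cosets (K \<inter> conj_pow E g n K) K) \<le> B"
      using B[of n] by (simp add: sg_index_eq_card_right_cosets)
    have "finite (orbit (conj_pow E g n K) (r (n * k)))"
      unfolding orbit_conj_pow_g using KD(4) by simp
    then show "card (orbit (K \<inter> conj_pow E g n K) (r (n * k))) \<le>
        card (orbit (conj_pow E g n K) (r (n * k)))"
      by (rule card_mono) auto
  qed
  also have "\<dots> \<le> B * card (orbit K (r 0))"
    unfolding orbit_conj_pow_g by (rule mult_le_mono2[OF card_image_le[OF KD(4)]])
  finally show ?thesis .
qed

lemma open_end_stabilizer_if_bounded_index: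
  assumes K: "compact_open_subgroup E G K" and B: "\<And>n. sg_index E K (K \<inter> conj_pow E g n K) \<le> B"
  shows "openin (subtopology (aut_top E) G) (end_stabilizer G \<xi>)"
proof -
  note KD = compact_open_subgroupD[OF K]
  obtain F where F: "finite F" "G \<inter> fixator F \<subseteq> K" using fixator_subset_if_open[OF KD(3,1)] .
  define K' where "K' = K \<inter> fixator {r 0}"
  have K'_subgroup: "subgroup K' (aut_group E)"
    unfolding K'_def by (rule subgroup_aut_group_Int_fixator[OF KD(1)])
  have K'_base: "K' \<subseteq> fixator {r 0}" unfolding K'_def by blast
  have K'_orbits: "finite (orbit K' u)" for u
    using KD(4)[of u] unfolding K'_def by (rule finite_subset[rotated]) auto
  note K' = K'_subgroup K'_base K'_orbits
  have "card (orbit K' (r m)) \<le> B * card (orbit K (r 0))" for m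
  proof -
    have "card (orbit K' (r m)) \<le> card (orbit K' (r (m * k)))"
      using k_pos by (intro card_orbit_ray_mono[OF K']) simp
    also have "\<dots> \<le> card (orbit K (r (m * k)))"
      using KD(4) unfolding K'_def by (intro card_mono) auto
    also have "\<dots> \<le> B * card (orbit K (r 0))" by (rule card_orbit_translate_le[OF K B])
    finally show ?thesis .
  qed
  then obtain M where M: "\<And>m. card (orbit K' (r m)) \<le> card (orbit K' (r M))"
    using ex_has_greatest_nat[of "\<lambda>_. True" 0 "\<lambda>m. card (orbit K' (r m))"
        "Suc (B * card (orbit K (r 0)))"]
    by (auto simp: less_Suc_eq_le)
  have "G \<inter> fixator (insert (r 0) (insert (r M) F)) \<subseteq> end_stabilizer G \<xi>"
  proof
    fix h assume h: "h \<in> G \<inter> fixator (insert (r 0) (insert (r M) F))"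
    then have hK': "h \<in> K'" using F(2) unfolding K'_def by auto
    have "h (r m) = r m" for m
    proof (cases "M \<le> m")
      case True
      then have "card (orbit K' (r m)) = card (orbit K' (r M))"
        using card_orbit_ray_mono[OF K' True] M[of m] by simp
      then show ?thesis using fixes_ray_if_card_orbit_eq[OF K'] True hK' h by auto
    next
      case False
      then show ?thesis using tree_aut_fixes_ray_segment[OF tree ray] GD(1) h by auto
    qed
    then show "h \<in> end_stabilizer G \<xi>"
      using h GD(1) end_action_fixes_ray_class[OF _ ray] unfolding end_stabilizer_def by auto
  qed
  then show ?thesis
    using subgroup_aut_groupD(3)[OF subgroup_end_stabilizer] F(1)
    by (intro openin_if_fixator_subset[OF subgroup_G]) (auto simp: end_stabilizer_def)
qed

lemma bounded_index_if_open_end_stabilizer: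
  assumes open_stab: "openin (subtopology (aut_top E) G) (end_stabilizer G \<xi>)"
    and L: "compact_open_subgroup E G L"
  shows "\<exists>B. \<forall>n. sg_index E L (L \<inter> conj_pow E g n L) \<le> B"
proof -
  note LD = compact_open_subgroupD[OF L]
  obtain F where F: "finite F" "G \<inter> fixator F \<subseteq> end_stabilizer G \<xi>"
    using fixator_subset_if_open[OF open_stab subgroup_end_stabilizer] .
  define H where "H = L \<inter> fixator (insert (r 0) F)"
  have H: "subgroup H (aut_group E)" "H \<subseteq> L" "finite (right_cosets H L)"
    using subgroup_aut_group_Int_fixator[OF LD(1)] F(1)
      card_right_cosets_fixator_le(1)[OF LD(1) _ LD(4)]
    unfolding H_def by auto
  have H_ray: "H \<subseteq> ray_fixator"
    using F(2) end_stabilizer_fixes_ray LD(2) unfolding H_def ray_fixator_def by fastforce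
  have orbit_bound:
    "card (orbit L ((g ^^ n) u)) \<le> card (right_cosets H L) * card (orbit ray_fixator u)" for n u
  proof -
    have finR: "finite (orbit ray_fixator u)"
      by (rule finite_orbit_if_compactin[OF compactin_ray_fixator])
    have "orbit H ((g ^^ n) u) \<subseteq> (g ^^ n) ` orbit ray_fixator u"
    proof
      fix z assume "z \<in> orbit H ((g ^^ n) u)"
      then obtain h where h: "h \<in> H" "z = h ((g ^^ n) u)" by blast
      then have "z = (g ^^ n) ((fun_inv (g ^^ n) \<circ> h \<circ> (g ^^ n)) u)"
        using tree_aut_f_inv[OF tree_aut_g_funpow] by simp
      then show "z \<in> (g ^^ n) ` orbit ray_fixator u" using conj_inv_ray_fixator H_ray h(1) by blast
    qed
    then have "card (orbit H ((g ^^ n) u)) \<le> card ((g ^^ n) ` orbit ray_fixator u)"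
      using finR by (intro card_mono) auto
    also have "\<dots> \<le> card (orbit ray_fixator u)" by (rule card_image_le[OF finR])
    finally have "card (right_cosets H L) * card (orbit H ((g ^^ n) u)) \<le>
        card (right_cosets H L) * card (orbit ray_fixator u)" by (rule mult_le_mono2)
    with card_orbit_le_index_mult[OF LD(1) H, of "(g ^^ n) u"] show ?thesis by (rule le_trans)
  qed
  obtain FL where "finite FL" "\<And>n. finite (right_cosets (L \<inter> conj_pow E g n L) L)"
    and FL: "\<And>n. card (right_cosets (L \<inter> conj_pow E g n L) L) \<le> (\<Prod>u\<in>FL. card (orbit L ((g ^^ n) u)))"
    by (rule index_conj_pow_le[OF L]) (rule that)
  have "sg_index E L (L \<inter> conj_pow E g n L) \<le>
      (\<Prod>u\<in>FL. card (right_cosets H L) * card (orbit ray_fixator u))" for n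
    unfolding sg_index_eq_card_right_cosets using FL[of n]
    by (rule le_trans[OF _ prod_mono]) (simp add: orbit_bound)
  then show ?thesis by blast
qed

end

theorem proposition3p2:
  fixes E :: "'v \<Rightarrow> 'v \<Rightarrow> bool" and G :: "('v \<Rightarrow> 'v) set"
    and g :: "'v \<Rightarrow> 'v" and x :: "(nat \<Rightarrow> 'v) set"
  assumes "is_tree E" and "locally_finite E"
    and "closed_subgroup E G"
    and "g \<in> G" and "hyperbolic E g"
    and "attracting_end E g x"
  shows "(openin (subtopology (aut_top E) G) (end_stabilizer G x)
           \<longleftrightarrow> (\<exists>K. compact_open_subgroup E G K \<and> (\<forall>n. K \<subseteq> conj_pow E g n K)))
       \<and> ((\<exists>K. compact_open_subgroup E G K \<and> (\<forall>n. K \<subseteq> conj_pow E g n K))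
           \<longleftrightarrow> (\<exists>K. compact_open_subgroup E G K \<and>
                  (\<exists>B. \<forall>n. sg_index E K (K \<inter> conj_pow E g n K) \<le> B)))
       \<and> ((\<exists>K. compact_open_subgroup E G K \<and>
                  (\<exists>B. \<forall>n. sg_index E K (K \<inter> conj_pow E g n K) \<le> B))
           \<longleftrightarrow> (\<forall>K. compact_open_subgroup E G K \<longrightarrow>
                  (\<exists>B. \<forall>n. sg_index E K (K \<inter> conj_pow E g n K) \<le> B)))"
proof -
  obtain r k where r: "is_ray E r" "x = ray_class E r" "k > 0" "\<forall>n. g (r n) = r (n + k)"
    using assms(6) unfolding attracting_end_def by blast
  interpret ray_translation E G g r k
    using assms(1-4) r by unfold_locales auto
  let ?i = "openin (subtopology (aut_top E) G) (end_stabilizer G x)"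
  let ?ii = "\<exists>K. compact_open_subgroup E G K \<and> (\<forall>n. K \<subseteq> conj_pow E g n K)"
  let ?iii = "\<exists>K. compact_open_subgroup E G K \<and> (\<exists>B. \<forall>n. sg_index E K (K \<inter> conj_pow E g n K) \<le> B)"
  let ?iv = "\<forall>K. compact_open_subgroup E G K \<longrightarrow> (\<exists>B. \<forall>n. sg_index E K (K \<inter> conj_pow E g n K) \<le> B)"
  have "?i \<Longrightarrow> ?ii"
    using compact_open_ray_fixator ray_fixator_subset_conj_pow r(2) by blast
  moreover have "?ii \<Longrightarrow> ?iii"
    using sg_index_Int_superset compact_open_subgroupD(1) by (metis order_refl)
  moreover have "?iii \<Longrightarrow> ?i"
    using open_end_stabilizer_if_bounded_index r(2) by blast
  moreover have "?i \<Longrightarrow> ?iv"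
    using bounded_index_if_open_end_stabilizer r(2) by blast
  moreover have "?iv \<Longrightarrow> ?iii"
    using compact_open_subgroup_fixator[of "r 0" "{r 0}"] by blast
  ultimately show ?thesis by blast
qed

end
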